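(* Let $n\ge 1$, $\pi\in S_n$ and $1\le i\le n+1$. If one deletes the entry $1$ from $s_{1\dot{2}}(\mathrm{ins}_i(\pi))$ and then subtracts $1$ from every remaining entry, the result is exactly $s_{1\dot{2}}(\pi)$. Equivalently, the entries $2,3,\dots,n+1$ appear in $s_{1\dot{2}}(\mathrm{ins}_i(\pi))$ in the same relative order as the entries $1,2,\dots,n$ appear in $s_{1\dot{2}}(\pi)$, with $x$ corresponding to $x-1$.
   Context: The $1\dot{2}$-avoiding stack-sorting map $s_{1\dot{2}}$ is defined as follows. Start with the input $\pi$ and an empty stack. Repeat the following step until both the input and the stack are empty: - If input remains, and either the stack is empty or the next input entry is smaller than the entry at the bottom of the stack, push the next input entry onto the top of the stack. - Otherwise, pop the top entry of the stack and append it to the output. The output word is $s_{1\dot{2}}(\pi)$. For $\pi\in S_n$, $\mathrm{inc}(\pi)$ is the word obtained by adding $1$ to every entry of $\pi$. For $1\le i\le n+1$, $\mathrm{ins}_i(\pi)\in S_{n+1}$ is the permutation obtained from $\mathrm{inc}(\pi)$ by inserting the entry $1$ so that it occupies position $i$. *)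

theory Defs
  imports Main
begin

text \<open>Permutations of [n] are represented as lists in one-line notation.
  The stack is a list whose head is the top and whose last element is the bottom.\<close>

definition is_perm :: "nat \<Rightarrow> nat list \<Rightarrow> bool" where
  "is_perm n p \<longleftrightarrow> distinct p \<and> set p = {1..n}"

function s12_aux :: "nat list \<Rightarrow> nat list \<Rightarrow> nat list \<Rightarrow> nat list" where
  "s12_aux inp stk out =
     (if inp = [] \<and> stk = [] then out
      else if inp \<noteq> [] \<and> (stk = [] \<or> hd inp < last stk)
        then s12_aux (tl inp) (hd inp # stk) out
      else s12_aux inp (tl stk) (out @ [hd stk]))"
  by pat_completeness auto
termination
  by (relation "measure (\<lambda>(inp, stk, out). 2 * length inp + length stk)") (auto simp: neq_Nil_conv)

definition s12 :: "nat list \<Rightarrow> nat list" where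
  "s12 p = s12_aux p [] []"

definition inc :: "nat list \<Rightarrow> nat list" where
  "inc p = map Suc p"

definition ins :: "nat \<Rightarrow> nat list \<Rightarrow> nat list" where
  "ins i p = take (i - 1) (inc p) @ [1] @ drop (i - 1) (inc p)"

end

theory Submission
  imports Defs
begin

text \<open>The entry 1 is smaller than every other entry, so pushing it is never blocked. Moreover 1
  can only sit at the bottom of the stack when nothing else is on it: the next entry then
  fails the comparison with 1 and the 1 is popped first. Hence the bottom of the stack, the
  only entry that is ever compared with the input, is unaffected by erasing 1, and erasing 1
  from every configuration of the machine turns a run on \<open>ins i \<pi>\<close> into the run on \<open>\<pi>\<close>.\<close>

definition erase_one :: "nat list \<Rightarrow> nat list" where
  "erase_one xs = map (\<lambda>x. x - 1) (filter (\<lambda>x. x \<noteq> 1) xs)"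

lemma erase_one_simps [simp]:
  "erase_one [] = []"
  "erase_one (Suc 0 # xs) = erase_one xs"
  "x \<noteq> 1 \<Longrightarrow> erase_one (x # xs) = (x - 1) # erase_one xs"
  "erase_one (xs @ ys) = erase_one xs @ erase_one ys"
  by (auto simp: erase_one_def)

lemma erase_one_eq_Nil_iff: "erase_one xs = [] \<longleftrightarrow> set xs \<subseteq> {1}"
  by (induction xs) (auto simp: erase_one_def)

lemma last_erase_one: "xs \<noteq> [] \<Longrightarrow> last xs \<noteq> 1 \<Longrightarrow> last (erase_one xs) = last xs - 1"
  by (induction xs) (auto simp: erase_one_def filter_empty_conv)

lemma erase_one_inc: "0 \<notin> set p \<Longrightarrow> erase_one (inc p) = p"
  by (induction p) (auto simp: inc_def)

lemma erase_one_ins: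
  assumes "0 \<notin> set p"
  shows "erase_one (ins i p) = p"
proof -
  have "erase_one (ins i p) = erase_one (take (i - 1) (inc p)) @ erase_one (drop (i - 1) (inc p))"
    unfolding ins_def by simp
  also have "\<dots> = erase_one (inc p)"
    by (simp only: erase_one_simps(4)[symmetric] append_take_drop_id)
  finally show ?thesis using assms by (simp add: erase_one_inc)
qed

lemma zero_notin_ins: "0 \<notin> set (ins i p)"
  by (auto simp: ins_def inc_def dest: in_set_takeD in_set_dropD)

declare s12_aux.simps [simp del]

lemma s12_aux_finish: "s12_aux [] [] out = out"
  by (simp add: s12_aux.simps)

lemma s12_aux_push:
  "stk = [] \<or> x < last stk \<Longrightarrow> s12_aux (x # xs) stk out = s12_aux xs (x # stk) out"
  by (subst s12_aux.simps) auto

lemma s12_aux_pop: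
  "\<not> (inp \<noteq> [] \<and> hd inp < last (t # ts)) \<Longrightarrow>
   s12_aux inp (t # ts) out = s12_aux inp ts (out @ [t])"
  by (subst s12_aux.simps) auto

lemma erase_one_s12_aux:
  assumes "0 \<notin> set inp" and "0 \<notin> set stk"
    and "erase_one stk \<noteq> [] \<Longrightarrow> last stk \<noteq> 1"
  shows "erase_one (s12_aux inp stk out) = s12_aux (erase_one inp) (erase_one stk) (erase_one out)"
  using assms
proof (induction inp stk out rule: s12_aux.induct)
  case (1 inp stk out)
  consider (finish) "inp = []" "stk = []"
    | (push) x xs where "inp = x # xs" "stk = [] \<or> x < last stk"
    | (pop) t ts where "stk = t # ts" "\<not> (inp \<noteq> [] \<and> hd inp < last stk)"
    by (cases inp; cases stk) auto
  then show ?case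
  proof cases
    case finish
    then show ?thesis by (simp add: s12_aux_finish)
  next
    case (push x xs)
    have "x \<noteq> 0" using "1.prems"(1) push(1) by simp
    have bottom: "last (x # stk) \<noteq> 1" if "erase_one (x # stk) \<noteq> []"
    proof (cases "stk = []")
      case True
      with that show ?thesis by (auto simp: erase_one_eq_Nil_iff)
    next
      case False
      show ?thesis
      proof (cases "erase_one stk = []")
        case True
        moreover have "last stk \<in> set stk" using False by simp
        ultimately have "last stk = 1" by (auto simp: erase_one_eq_Nil_iff)
        with push(2) False \<open>x \<noteq> 0\<close> show ?thesis by simp
      qed (use False "1.prems"(3) in simp)
    qed
    have IH: "erase_one (s12_aux xs (x # stk) out)
        = s12_aux (erase_one xs) (erase_one (x # stk)) (erase_one out)"
      using "1.IH"(1) "1.prems"(1,2) push bottom by simp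
    show ?thesis
    proof (cases "x = 1")
      case True
      with push IH show ?thesis by (simp add: s12_aux_push)
    next
      case False
      have "erase_one stk = [] \<or> x - 1 < last (erase_one stk)"
      proof (cases "erase_one stk = []")
        case False
        then have "stk \<noteq> []" "last stk \<noteq> 1" using "1.prems"(3) by auto
        with push(2) \<open>x \<noteq> 0\<close> show ?thesis by (auto simp: last_erase_one)
      qed simp
      with push IH False show ?thesis by (simp add: s12_aux_push)
    qed
  next
    case (pop t ts)
    have IH: "erase_one (s12_aux inp ts (out @ [t]))
        = s12_aux (erase_one inp) (erase_one ts) (erase_one (out @ [t]))"
      using "1.IH"(2) "1.prems" pop by (cases ts) (auto simp: erase_one_eq_Nil_iff)
    show ?thesis
    proof (cases "t = 1")
      case True
      with pop IH show ?thesis by (simp add: s12_aux_pop)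
    next
      case False
      have "last stk \<noteq> 1" using "1.prems"(3) pop(1) False by simp
      have blocked: "\<not> (erase_one inp \<noteq> [] \<and> hd (erase_one inp) < last (erase_one stk))"
      proof
        assume "erase_one inp \<noteq> [] \<and> hd (erase_one inp) < last (erase_one stk)"
        then obtain y ys where inp: "inp = y # ys"
          and less: "hd (erase_one inp) < last stk - 1"
          using pop(1) \<open>last stk \<noteq> 1\<close> by (cases inp) (auto simp: last_erase_one)
        have "last stk \<in> set stk" using pop(1) by simp
        with "1.prems"(2) have "last stk \<noteq> 0" by metis
        have "last stk \<le> y" using pop(2) inp by simp
        with less inp \<open>last stk \<noteq> 1\<close> show False by (cases "y = 1") auto
      qed
      from pop(1) False have "erase_one stk = (t - 1) # erase_one ts" by simp
      with blocked pop IH False show ?thesis by (simp add: s12_aux_pop)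
    qed
  qed
qed

lemma erase_one_s12_ins: "0 \<notin> set p \<Longrightarrow> erase_one (s12 (ins i p)) = s12 p"
  using erase_one_s12_aux[of "ins i p" "[]" "[]"]
  by (simp add: s12_def zero_notin_ins erase_one_ins)

theorem lemma3p3:
  fixes n i :: nat and p :: "nat list"
  assumes "n \<ge> 1" and "is_perm n p" and "1 \<le> i" and "i \<le> n + 1"
  shows "map (\<lambda>x. x - 1) (filter (\<lambda>x. x \<noteq> 1) (s12 (ins i p))) = s12 p"
proof -
  have "0 \<notin> set p" using assms(2) by (auto simp: is_perm_def)
  then show ?thesis using erase_one_s12_ins by (simp add: erase_one_def)
qed

end
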